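(* Let $n\ge2$, let $\gamma:I\to S^n$ be a spherical unit speed curve whose spherical dual curve $\mathbf{u}_n$ is non-singular (i.e. $\mathbf{u}_n'(s)\neq\mathbf{0}$ for all $s\in I$), let $s_0\in I$ and let $P\in S^{n-2}_{\mathbf{u}_{n-2}(s_0)}$. Then: (1) the germ $ort_{\gamma,P}:(I,s_0)\to S^n$ is $\mathcal{L}$-equivalent to $ped_{\gamma,P}:(I,s_0)\to S^n$; (2) the germ $ort_{\gamma,P}:(I,s_0)\to S^n$ is not $\mathcal{A}$-equivalent to $\mathbf{u}_n:(I,s_0)\to S^n$.
   Context: $I\subset\mathbb{R}$ is an open interval and $S^n$ the unit sphere in $\mathbb{R}^{n+1}$; the dot denotes the Euclidean inner product. A regular curve $\gamma:I\to S^n$ is a spherical unit speed curve if, setting $\mathbf{u}_{-1}\equiv\mathbf{0}$, $\mathbf{u}_0=\gamma$, $\|\mathbf{u}_0'\|\equiv 1$, $\kappa_0\equiv 0$, the maps $\mathbf{u}_i(s)=\dfrac{\mathbf{u}_{i-1}'(s)+\kappa_{i-1}(s)\mathbf{u}_{i-2}(s)}{\|\mathbf{u}_{i-1}'(s)+\kappa_{i-1}(s)\mathbf{u}_{i-2}(s)\|}$ with $\kappa_i(s)=\|\mathbf{u}_{i-1}'(s)+\kappa_{i-1}(s)\mathbf{u}_{i-2}(s)\|>0$ are well-defined for $1\le i\le n-1$ and all $s\in I$. Then $\mathbf{u}_0(s),\dots,\mathbf{u}_{n-1}(s)$ are orthonormal, and the spherical dual curve $\mathbf{u}_n:I\to S^n$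 is defined by requiring $\mathbf{u}_0(s),\dots,\mathbf{u}_n(s)$ orthonormal with $\det(\mathbf{u}_0(s),\dots,\mathbf{u}_n(s))=1$. For $P\in S^n$ with $P\cdot\mathbf{u}_n(s)\neq\pm1$, the spherical pedal curve is $ped_{\gamma,P}(s)=\dfrac{P-(P\cdot\mathbf{u}_n(s))\mathbf{u}_n(s)}{\sqrt{1-(P\cdot\mathbf{u}_n(s))^2}}$ (defined as a germ at $s_0$ when $P\neq\pm\mathbf{u}_n(s_0)$). For any $P\in S^n$ the spherical orthotomic curve is $ort_{\gamma,P}(s)=P-2(P\cdot\mathbf{u}_n(s))\mathbf{u}_n(s)$. For $-1\le i\le n$, $S^i_{\mathbf{u}_i(s)}=(S^n\setminus\{\pm\mathbf{u}_n(s)\})\cap\sum_{j=-1}^{i}\mathbb{R}\mathbf{u}_j(s)$. Two germs $f,g:(I,s_0)\to S^n$ are $\mathcal{L}$-equivalent if there is a germ of $C^\infty$ diffeomorphism $\psi:(S^n,f(s_0))\to(S^n,g(s_0))$ with $g=\psi\circ f$; they are $\mathcal{A}$-equivalent if there are germs of $C^\infty$ diffeomorphisms $\phi:(I,s_0)\to(I,s_0)$ and $\psi:(S^n,f(s_0))\to(S^n,g(s_0))$ with $g\circ\phi=\psi\circ f$. *)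

theory Defs
  imports "HOL-Analysis.Analysis"
begin

fun dder :: "'a::real_normed_vector list \<Rightarrow> ('a \<Rightarrow> 'b::real_normed_vector) \<Rightarrow> 'a \<Rightarrow> 'b" where
  "dder [] f = f"
| "dder (v # vs) f = (\<lambda>x. vector_derivative (\<lambda>t. dder vs f (x + t *\<^sub>R v)) (at 0))"

definition smooth_on :: "'a::real_normed_vector set \<Rightarrow> ('a \<Rightarrow> 'b::real_normed_vector) \<Rightarrow> bool" where
  "smooth_on U f \<longleftrightarrow>
     (\<forall>vs. continuous_on U (dder vs f) \<and>
        (\<forall>x\<in>U. \<forall>v. (\<lambda>t. dder vs f (x + t *\<^sub>R v)) differentiable (at 0)))"

text \<open>frame g i = (u_{i-1}, u_i, kappa_i), with u_{-1} = 0, u_0 = g, kappa_0 = 0.\<close>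
fun frame :: "(real \<Rightarrow> 'a::real_normed_vector) \<Rightarrow> nat \<Rightarrow>
     (real \<Rightarrow> 'a) \<times> (real \<Rightarrow> 'a) \<times> (real \<Rightarrow> real)" where
  "frame g 0 = ((\<lambda>s. 0), g, (\<lambda>s. 0))"
| "frame g (Suc i) =
     (let (p, u, k) = frame g i;
          w = (\<lambda>s. vector_derivative u (at s) + k s *\<^sub>R p s)
      in (u, (\<lambda>s. w s /\<^sub>R norm (w s)), (\<lambda>s. norm (w s))))"

definition ufr :: "(real \<Rightarrow> 'a::real_normed_vector) \<Rightarrow> nat \<Rightarrow> real \<Rightarrow> 'a" where
  "ufr g i = fst (snd (frame g i))"

definition kap :: "(real \<Rightarrow> 'a::real_normed_vector) \<Rightarrow> nat \<Rightarrow> real \<Rightarrow> real" where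
  "kap g i = snd (snd (frame g i))"

text \<open>Spherical unit speed curve in S^n (the ambient space real^'m has dimension n+1).\<close>
definition spherical_unit_speed :: "nat \<Rightarrow> real set \<Rightarrow> (real \<Rightarrow> real^'m) \<Rightarrow> bool" where
  "spherical_unit_speed n I g \<longleftrightarrow>
     smooth_on I g \<and>
     (\<forall>s\<in>I. g s \<in> sphere 0 1) \<and>
     (\<forall>s\<in>I. g differentiable (at s) \<and> norm (vector_derivative g (at s)) = 1) \<and>
     (\<forall>i\<in>{1..n-1}. \<forall>s\<in>I. kap g i s > 0)"

text \<open>The bijection idx : {0..n} -> 'm identifies
  real^'m with R^(n+1) (coordinate k of R^(n+1) is component idx k); the determinant
  det(u_0,...,u_n) is then computed as below (conjugating rows and columns by the same
  permutation does not change the determinant).\<close>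
definition dual_curve :: "nat \<Rightarrow> (nat \<Rightarrow> 'm::finite) \<Rightarrow> (real \<Rightarrow> real^'m) \<Rightarrow> real \<Rightarrow> real^'m" where
  "dual_curve n idx g s =
     (THE v. (\<forall>i<n. ufr g i s \<bullet> v = 0) \<and> norm v = 1 \<and>
        det (\<chi> a. (let j = inv_into {..n} idx a in if j = n then v else ufr g j s)) = 1)"

definition pedal :: "nat \<Rightarrow> (nat \<Rightarrow> 'm::finite) \<Rightarrow> (real \<Rightarrow> real^'m) \<Rightarrow> real^'m \<Rightarrow> real \<Rightarrow> real^'m" where
  "pedal n idx g P s =
     (let U = dual_curve n idx g s in
       (P - (P \<bullet> U) *\<^sub>R U) /\<^sub>R sqrt (1 - (P \<bullet> U)\<^sup>2))"

definition orthotomic :: "nat \<Rightarrow> (nat \<Rightarrow> 'm::finite) \<Rightarrow> (real \<Rightarrow> real^'m) \<Rightarrow> real^'m \<Rightarrow> real \<Rightarrow> real^'m" where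
  "orthotomic n idx g P s =
     (let U = dual_curve n idx g s in P - (2 * (P \<bullet> U)) *\<^sub>R U)"

text \<open>S^i_{u_i(s)} for 0 <= i (u_{-1} = 0 contributes nothing to the span).\<close>
definition sub_sphere :: "nat \<Rightarrow> (nat \<Rightarrow> 'm::finite) \<Rightarrow> (real \<Rightarrow> real^'m) \<Rightarrow> nat \<Rightarrow> real \<Rightarrow> (real^'m) set" where
  "sub_sphere n idx g i s =
     (sphere 0 1 - {dual_curve n idx g s, - dual_curve n idx g s}) \<inter> span ((\<lambda>j. ufr g j s) ` {..i})"

text \<open>Germ of a C-infinity diffeomorphism of the (embedded) set M from (M,p) to (M,q):
  locally the restriction of ambient C-infinity maps that are mutually inverse on M.\<close>
definition diffeo_germ :: "'a::real_normed_vector set \<Rightarrow> 'a \<Rightarrow> 'a \<Rightarrow> ('a \<Rightarrow> 'a) \<Rightarrow> bool" where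
  "diffeo_germ M p q \<psi> \<longleftrightarrow> \<psi> p = q \<and>
     (\<exists>U V \<phi>. open U \<and> open V \<and> p \<in> U \<and> q \<in> V \<and> smooth_on U \<psi> \<and> smooth_on V \<phi> \<and>
        (\<forall>x\<in>M \<inter> U. \<psi> x \<in> M \<inter> V \<and> \<phi> (\<psi> x) = x) \<and>
        (\<forall>y\<in>M \<inter> V. \<phi> y \<in> M \<inter> U \<and> \<psi> (\<phi> y) = y))"

definition L_equiv :: "(real \<Rightarrow> real^'m) \<Rightarrow> (real \<Rightarrow> real^'m) \<Rightarrow> real \<Rightarrow> bool" where
  "L_equiv f g s0 \<longleftrightarrow>
     (\<exists>\<psi>. diffeo_germ (sphere 0 1) (f s0) (g s0) \<psi> \<and> (\<forall>\<^sub>F s in nhds s0. g s = \<psi> (f s)))"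

definition A_equiv :: "(real \<Rightarrow> real^'m) \<Rightarrow> (real \<Rightarrow> real^'m) \<Rightarrow> real \<Rightarrow> bool" where
  "A_equiv f g s0 \<longleftrightarrow>
     (\<exists>\<phi> \<psi>. diffeo_germ (UNIV :: real set) s0 s0 \<phi> \<and>
        diffeo_germ (sphere 0 1) (f s0) (g s0) \<psi> \<and>
        (\<forall>\<^sub>F s in nhds s0. g (\<phi> s) = \<psi> (f s)))"

end

theory Submission
  imports Defs
begin

text \<open>Write \<open>U = u\<^sub>n\<close> for the dual curve. Differentiating \<open>u\<^sub>j \<bullet> U = 0\<close> and using the
  Frenet equations \<open>u\<^sub>j' = \<kappa>\<^sub>j\<^sub>+\<^sub>1 u\<^sub>j\<^sub>+\<^sub>1 - \<kappa>\<^sub>j u\<^sub>j\<^sub>-\<^sub>1\<close> gives \<open>U' \<bottom> u\<^sub>j\<close> for \<open>j \<le> n - 2\<close>,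
  so every \<open>P\<close> in the span of \<open>u\<^sub>0, \<dots>, u\<^sub>n\<^sub>-\<^sub>2\<close> at \<open>s\<^sub>0\<close> satisfies
  \<open>P \<bullet> U = P \<bullet> U' = 0\<close> there. Hence \<open>ort = P - 2 (P \<bullet> U) U\<close> passes through \<open>P\<close> with zero
  velocity at \<open>s\<^sub>0\<close>.

  (1) On the sphere \<open>ped = \<psi> \<circ> ort\<close> with \<open>\<psi> x = (P + x) / \<parallel>P + x\<parallel>\<close>, a diffeomorphism
  between the half-spheres \<open>P \<bullet> x > -1\<close> and \<open>P \<bullet> y > 0\<close> with inverse \<open>y \<mapsto> 2 (P \<bullet> y) y - P\<close>.

  (2) If \<open>U \<circ> \<phi> = \<psi> \<circ> ort\<close> for germs of diffeomorphisms, the right-hand side still has zero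
  derivative at \<open>s\<^sub>0\<close> because \<open>\<psi>\<close> is locally Lipschitz, while the left-hand side has derivative
  \<open>\<phi>'(s\<^sub>0) U'(s\<^sub>0) \<noteq> 0\<close>.\<close>

section \<open>Higher derivatives on the real line\<close>

definition vderiv :: "(real \<Rightarrow> 'a::real_normed_vector) \<Rightarrow> real \<Rightarrow> 'a" where
  "vderiv f s = vector_derivative f (at s)"

primrec k_times_differentiable_on :: "nat \<Rightarrow> real set \<Rightarrow> (real \<Rightarrow> 'a::real_normed_vector) \<Rightarrow> bool" where
  "k_times_differentiable_on 0 I f \<longleftrightarrow> True"
| "k_times_differentiable_on (Suc k) I f \<longleftrightarrow>
     (\<forall>x\<in>I. f differentiable at x) \<and> k_times_differentiable_on k I (vderiv f)"

definition infinitely_differentiable_on :: "real set \<Rightarrow> (real \<Rightarrow> 'a::real_normed_vector) \<Rightarrow> bool" where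
  "infinitely_differentiable_on I f \<longleftrightarrow> (\<forall>k. k_times_differentiable_on k I f)"

lemma vderiv_has_vector_derivative:
  "f differentiable at x \<Longrightarrow> (f has_vector_derivative vderiv f x) (at x)"
  unfolding vderiv_def by (rule vector_derivative_works[THEN iffD1])

lemma vderiv_eqI: "(f has_vector_derivative d) (at x) \<Longrightarrow> vderiv f x = d"
  unfolding vderiv_def by (rule vector_derivative_at)

lemma vderiv_cong_open:
  assumes "open I" "x \<in> I" "\<And>y. y \<in> I \<Longrightarrow> f y = g y"
  shows "vderiv f x = vderiv g x"
  unfolding vderiv_def vector_derivative_def
  using has_vector_derivative_transform_within_open[OF _ assms(1,2)] assms(2,3) by metis

lemma differentiable_cong_open:
  fixes f g :: "real \<Rightarrow> 'a::real_normed_vector"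
  assumes "open I" "x \<in> I" "\<And>y. y \<in> I \<Longrightarrow> f y = g y"
  shows "f differentiable at x \<longleftrightarrow> g differentiable at x"
  unfolding differentiable_def
  using has_derivative_transform_within_open[OF _ assms(1,2)] assms(2,3) by metis

lemma k_times_differentiable_on_cong:
  assumes "open I" "\<And>y. y \<in> I \<Longrightarrow> f y = g y"
  shows "k_times_differentiable_on k I f \<longleftrightarrow> k_times_differentiable_on k I g"
  using assms(2)
proof (induction k arbitrary: f g)
  case (Suc k)
  have "k_times_differentiable_on k I (vderiv f) = k_times_differentiable_on k I (vderiv g)"
    using Suc.IH vderiv_cong_open[OF assms(1)] Suc.prems by blast
  with differentiable_cong_open[OF assms(1) _ Suc.prems] show ?case by auto
qed simp

lemma k_times_differentiable_on_SucI:
  assumes "open I" and "\<And>x. x \<in> I \<Longrightarrow> (f has_vector_derivative f' x) (at x)"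
    and "k_times_differentiable_on k I f'"
  shows "k_times_differentiable_on (Suc k) I f"
proof -
  have "k_times_differentiable_on k I (vderiv f)"
    using k_times_differentiable_on_cong[OF assms(1), of "vderiv f" f'] assms(2,3) vderiv_eqI by blast
  then show ?thesis using assms(2) differentiableI_vector by auto
qed

lemma k_times_differentiable_on_Suc_D:
  "k_times_differentiable_on (Suc k) I f \<Longrightarrow> k_times_differentiable_on k I f"
  by (induction k arbitrary: f) auto

lemma k_times_differentiable_on_const: "k_times_differentiable_on k I (\<lambda>x. c)"
proof (induction k arbitrary: c)
  case (Suc k)
  have "vderiv (\<lambda>x. c) = (\<lambda>x. 0)" by (simp add: fun_eq_iff vderiv_def)
  then show ?case using Suc by simp
qed simp

lemma k_times_differentiable_on_add:
  assumes "open I"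
  shows "k_times_differentiable_on k I f \<Longrightarrow> k_times_differentiable_on k I g \<Longrightarrow>
    k_times_differentiable_on k I (\<lambda>x. f x + g x)"
proof (induction k arbitrary: f g)
  case (Suc k)
  show ?case
    by (rule k_times_differentiable_on_SucI[OF assms, where f'="\<lambda>x. vderiv f x + vderiv g x"])
      (use Suc in \<open>auto intro!: has_vector_derivative_add vderiv_has_vector_derivative\<close>)
qed simp

lemma k_times_differentiable_on_bilinear:
  fixes prod :: "'a::real_normed_vector \<Rightarrow> 'b::real_normed_vector \<Rightarrow> 'c::real_normed_vector"
  assumes "open I" and bb: "bounded_bilinear prod"
  shows "k_times_differentiable_on k I f \<Longrightarrow> k_times_differentiable_on k I g \<Longrightarrow>
    k_times_differentiable_on k I (\<lambda>x. prod (f x) (g x))"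
proof (induction k arbitrary: f g)
  case (Suc k)
  have "k_times_differentiable_on k I f" "k_times_differentiable_on k I g"
    using Suc.prems k_times_differentiable_on_Suc_D by blast+
  then have "k_times_differentiable_on k I (\<lambda>x. prod (f x) (vderiv g x) + prod (vderiv f x) (g x))"
    using Suc.prems by (intro k_times_differentiable_on_add[OF assms(1)] Suc.IH) auto
  then show ?case
    by (rule k_times_differentiable_on_SucI[OF assms(1), rotated])
      (use Suc.prems in \<open>auto intro!: bounded_bilinear.has_vector_derivative[OF bb] vderiv_has_vector_derivative\<close>)
qed simp

lemmas k_times_differentiable_on_mult = k_times_differentiable_on_bilinear[OF _ bounded_bilinear_mult]
lemmas k_times_differentiable_on_scaleR = k_times_differentiable_on_bilinear[OF _ bounded_bilinear_scaleR]
lemmas k_times_differentiable_on_inner = k_times_differentiable_on_bilinear[OF _ bounded_bilinear_inner]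

lemma k_times_differentiable_on_inverse:
  fixes f :: "real \<Rightarrow> real"
  assumes "open I" and nz: "\<And>x. x \<in> I \<Longrightarrow> f x \<noteq> 0"
  shows "k_times_differentiable_on k I f \<Longrightarrow> k_times_differentiable_on k I (\<lambda>x. inverse (f x))"
proof (induction k)
  case (Suc k)
  have "k_times_differentiable_on k I (\<lambda>x. inverse (f x))"
    using Suc k_times_differentiable_on_Suc_D by blast
  then have "k_times_differentiable_on k I (\<lambda>x. (- 1) * (vderiv f x * (inverse (f x) * inverse (f x))))"
    using Suc.prems
    by (intro k_times_differentiable_on_mult[OF assms(1)] k_times_differentiable_on_const) auto
  moreover have "((\<lambda>x. inverse (f x)) has_vector_derivative
      (- 1) * (vderiv f x * (inverse (f x) * inverse (f x)))) (at x)" if "x \<in> I" for x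
  proof -
    have "(f has_real_derivative vderiv f x) (at x)"
      using Suc.prems that by (simp add: has_real_derivative_iff_has_vector_derivative vderiv_has_vector_derivative)
    from DERIV_inverse_fun[OF this nz[OF that]] show ?thesis
      by (simp add: has_real_derivative_iff_has_vector_derivative[symmetric] inverse_mult_distrib)
  qed
  ultimately show ?case by (rule k_times_differentiable_on_SucI[OF assms(1), rotated])
qed simp

lemma k_times_differentiable_on_sqrt:
  fixes f :: "real \<Rightarrow> real"
  assumes "open I" and pos: "\<And>x. x \<in> I \<Longrightarrow> f x > 0"
  shows "k_times_differentiable_on k I f \<Longrightarrow> k_times_differentiable_on k I (\<lambda>x. sqrt (f x))"
proof (induction k)
  case (Suc k)
  have "k_times_differentiable_on k I (\<lambda>x. inverse (sqrt (f x)))"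
    using Suc k_times_differentiable_on_Suc_D pos
    by (intro k_times_differentiable_on_inverse[OF assms(1)]) (auto simp: less_imp_neq[symmetric])
  then have "k_times_differentiable_on k I (\<lambda>x. inverse (sqrt (f x)) * inverse 2 * vderiv f x)"
    using Suc.prems
    by (intro k_times_differentiable_on_mult[OF assms(1)] k_times_differentiable_on_const) auto
  moreover have "((\<lambda>x. sqrt (f x)) has_vector_derivative
      inverse (sqrt (f x)) * inverse 2 * vderiv f x) (at x)" if "x \<in> I" for x
  proof -
    have "(f has_real_derivative vderiv f x) (at x)"
      using Suc.prems that by (simp add: has_real_derivative_iff_has_vector_derivative vderiv_has_vector_derivative)
    from DERIV_chain2[OF DERIV_real_sqrt[OF pos[OF that]] this] show ?thesis
      by (simp only: has_real_derivative_iff_has_vector_derivative divide_inverse)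
  qed
  ultimately show ?case by (rule k_times_differentiable_on_SucI[OF assms(1), rotated])
qed simp

lemma k_times_differentiable_on_normalize:
  fixes f :: "real \<Rightarrow> 'a::real_inner"
  assumes "open I" "\<And>x. x \<in> I \<Longrightarrow> f x \<noteq> 0" "k_times_differentiable_on k I f"
  shows "k_times_differentiable_on k I (\<lambda>x. norm (f x))"
    and "k_times_differentiable_on k I (\<lambda>x. f x /\<^sub>R norm (f x))"
proof -
  have "k_times_differentiable_on k I (\<lambda>x. sqrt (f x \<bullet> f x))"
    using assms by (intro k_times_differentiable_on_sqrt k_times_differentiable_on_inner) auto
  then show norm: "k_times_differentiable_on k I (\<lambda>x. norm (f x))"
    by (simp add: norm_eq_sqrt_inner)
  show "k_times_differentiable_on k I (\<lambda>x. f x /\<^sub>R norm (f x))"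
    using assms norm
    by (intro k_times_differentiable_on_scaleR k_times_differentiable_on_inverse) auto
qed

lemma infinitely_differentiable_onD:
  "infinitely_differentiable_on I f \<Longrightarrow> x \<in> I \<Longrightarrow> f differentiable at x"
  unfolding infinitely_differentiable_on_def using k_times_differentiable_on.simps(2) by blast

lemma infinitely_differentiable_on_vderiv:
  "infinitely_differentiable_on I f \<Longrightarrow> infinitely_differentiable_on I (vderiv f)"
  unfolding infinitely_differentiable_on_def using k_times_differentiable_on.simps(2) by blast

lemma has_vector_derivative_shift_0:
  fixes h :: "real \<Rightarrow> 'a::real_normed_vector"
  shows "(h has_vector_derivative d) (at x) \<longleftrightarrow> ((\<lambda>t. h (x + t)) has_vector_derivative d) (at 0)"
proof
  have "((\<lambda>t. x + t) has_vector_derivative 1) (at 0)"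
    by (auto intro!: derivative_eq_intros)
  then show "(h has_vector_derivative d) (at x) \<Longrightarrow> ((\<lambda>t. h (x + t)) has_vector_derivative d) (at 0)"
    using vector_diff_chain_at[of "\<lambda>t. x + t" 1 0 h d] by (simp add: o_def)
next
  have "((\<lambda>y. y - x) has_vector_derivative 1) (at x)"
    by (auto intro!: derivative_eq_intros)
  then show "((\<lambda>t. h (x + t)) has_vector_derivative d) (at 0) \<Longrightarrow> (h has_vector_derivative d) (at x)"
    using vector_diff_chain_at[of "\<lambda>y. y - x" 1 x "\<lambda>t. h (x + t)" d] by (simp add: o_def)
qed

lemma smooth_on_has_directional_derivative:
  assumes "smooth_on W f" "x \<in> W"
  shows "((\<lambda>t. dder vs f (x + t *\<^sub>R v)) has_vector_derivative dder (v # vs) f x) (at 0)"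
proof -
  have "(\<lambda>t. dder vs f (x + t *\<^sub>R v)) differentiable (at 0)"
    using assms unfolding smooth_on_def by blast
  then show ?thesis unfolding dder.simps(2) by (rule vector_derivative_works[THEN iffD1])
qed

lemma k_times_differentiable_on_iterates:
  assumes "\<And>j x. x \<in> I \<Longrightarrow> (vderiv ^^ j) f differentiable at x"
  shows "k_times_differentiable_on k I f"
  using assms
proof (induction k arbitrary: f)
  case (Suc k)
  have "(vderiv ^^ j) (vderiv f) = (vderiv ^^ Suc j) f" for j
    by (simp only: funpow_Suc_right o_def)
  then have "k_times_differentiable_on k I (vderiv f)"
    using Suc.prems by (intro Suc.IH) metis
  moreover have "\<forall>x\<in>I. f differentiable at x"
    using Suc.prems[of _ 0] by simp
  ultimately show ?case by simp
qed simp

lemma smooth_on_imp_infinitely_differentiable_on: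
  fixes g :: "real \<Rightarrow> 'a::real_normed_vector"
  assumes "open I" "smooth_on I g"
  shows "infinitely_differentiable_on I g"
proof -
  have dder_deriv: "(dder (replicate k 1) g has_vector_derivative dder (replicate (Suc k) 1) g x) (at x)"
    if "x \<in> I" for k x
    using smooth_on_has_directional_derivative[OF assms(2) that, of "replicate k 1" 1]
    by (simp add: has_vector_derivative_shift_0[of "dder (replicate k 1) g"])
  have iterate: "(vderiv ^^ k) g x = dder (replicate k 1) g x" if "x \<in> I" for k x
    using that
  proof (induction k arbitrary: x)
    case (Suc k)
    then have "vderiv ((vderiv ^^ k) g) x = vderiv (dder (replicate k 1) g) x"
      by (intro vderiv_cong_open[OF assms(1)])
    then show ?case using vderiv_eqI[OF dder_deriv[OF Suc.prems]] by simp
  qed simp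
  have "(vderiv ^^ k) g differentiable at x" if "x \<in> I" for k x
    using differentiableI_vector[OF dder_deriv[OF that]]
      differentiable_cong_open[OF assms(1) that iterate[where k=k]] by simp
  then show ?thesis
    unfolding infinitely_differentiable_on_def using k_times_differentiable_on_iterates by metis
qed

section \<open>The Frenet frame\<close>

definition ufr_prev :: "(real \<Rightarrow> 'a::real_normed_vector) \<Rightarrow> nat \<Rightarrow> real \<Rightarrow> 'a" where
  "ufr_prev g i = fst (frame g i)"

definition frenet_vector :: "(real \<Rightarrow> 'a::real_normed_vector) \<Rightarrow> nat \<Rightarrow> real \<Rightarrow> 'a" where
  "frenet_vector g i s = vderiv (ufr g i) s + kap g i s *\<^sub>R ufr_prev g i s"

lemma frame_0: "ufr g 0 = g" "ufr_prev g 0 = (\<lambda>s. 0)" "kap g 0 = (\<lambda>s. 0)"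
  by (simp_all add: ufr_prev_def ufr_def kap_def)

lemma frame_Suc:
  "ufr g (Suc i) = (\<lambda>s. frenet_vector g i s /\<^sub>R norm (frenet_vector g i s))"
  "ufr_prev g (Suc i) = ufr g i"
  "kap g (Suc i) = (\<lambda>s. norm (frenet_vector g i s))"
proof -
  have "frame g i = (ufr_prev g i, ufr g i, kap g i)"
    by (simp add: ufr_prev_def ufr_def kap_def)
  then have "frame g (Suc i) = (ufr g i, \<lambda>s. frenet_vector g i s /\<^sub>R norm (frenet_vector g i s),
      \<lambda>s. norm (frenet_vector g i s))"
    by (simp add: frenet_vector_def vderiv_def fun_eq_iff)
  then show "ufr g (Suc i) = (\<lambda>s. frenet_vector g i s /\<^sub>R norm (frenet_vector g i s))"
    "ufr_prev g (Suc i) = ufr g i" "kap g (Suc i) = (\<lambda>s. norm (frenet_vector g i s))"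
    by (simp_all add: ufr_prev_def ufr_def kap_def)
qed

text \<open>No curvature hypothesis is needed: where the Frenet vector vanishes, both sides
  reduce to \<open>-\<kappa>\<^sub>i u\<^sub>i\<^sub>-\<^sub>1\<close> because \<open>u\<^sub>i\<^sub>+\<^sub>1 = 0 /\<^sub>R 0 = 0\<close>.\<close>

lemma frenet_equation:
  "vderiv (ufr g i) s = kap g (Suc i) s *\<^sub>R ufr g (Suc i) s - kap g i s *\<^sub>R ufr_prev g i s"
  by (cases "frenet_vector g i s = 0") (auto simp: frame_Suc frenet_vector_def eq_neg_iff_add_eq_0)

lemma frame_infinitely_differentiable_on:
  fixes g :: "real \<Rightarrow> 'a::real_inner"
  assumes I: "open I" and g: "infinitely_differentiable_on I g"
    and kap_pos: "\<And>j s. 1 \<le> j \<Longrightarrow> j \<le> m \<Longrightarrow> s \<in> I \<Longrightarrow> kap g j s > 0"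
  shows "i \<le> m \<Longrightarrow> infinitely_differentiable_on I (ufr g i) \<and>
    infinitely_differentiable_on I (ufr_prev g i) \<and> infinitely_differentiable_on I (kap g i)"
proof (induction i)
  case 0
  then show ?case
    using g by (simp add: frame_0 infinitely_differentiable_on_def k_times_differentiable_on_const)
next
  case (Suc i)
  then have IH: "infinitely_differentiable_on I (ufr g i)" "infinitely_differentiable_on I (ufr_prev g i)"
    "infinitely_differentiable_on I (kap g i)" by auto
  have W: "k_times_differentiable_on k I (frenet_vector g i)" for k
    using IH infinitely_differentiable_on_vderiv[OF IH(1)] unfolding frenet_vector_def[abs_def]
    by (auto simp: infinitely_differentiable_on_def
        intro!: k_times_differentiable_on_add[OF I] k_times_differentiable_on_scaleR[OF I])
  have "frenet_vector g i s \<noteq> 0" if "s \<in> I" for s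
    using kap_pos[of "Suc i" s] Suc.prems that by (auto simp: frame_Suc)
  then show ?case
    using W IH(1) by (auto simp: frame_Suc infinitely_differentiable_on_def
        intro: k_times_differentiable_on_normalize[OF I])
qed

lemma inner_constant_on_derivative:
  fixes f h :: "real \<Rightarrow> 'a::real_inner"
  assumes "open I" "s \<in> I" "f differentiable at s" "h differentiable at s"
    and "\<And>y. y \<in> I \<Longrightarrow> f y \<bullet> h y = c"
  shows "f s \<bullet> vderiv h s + vderiv f s \<bullet> h s = 0"
proof -
  have "((\<lambda>y. f y \<bullet> h y) has_vector_derivative f s \<bullet> vderiv h s + vderiv f s \<bullet> h s) (at s)"
    using assms(3,4)
    by (auto intro!: bounded_bilinear.has_vector_derivative[OF bounded_bilinear_inner]
        vderiv_has_vector_derivative)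
  moreover have "((\<lambda>y. f y \<bullet> h y) has_vector_derivative 0) (at s)"
    by (rule has_vector_derivative_transform_within_open[OF has_vector_derivative_const assms(1,2)])
      (use assms(5) in simp)
  ultimately show ?thesis by (rule vector_derivative_unique_at)
qed

lemma ufr_prev_inner_ufr:
  assumes "\<And>l. l \<le> i \<Longrightarrow> ufr g l s \<bullet> ufr g j s = (if l = j then 1 else 0)"
  shows "ufr_prev g i s \<bullet> ufr g j s = (if i = Suc j then 1 else 0)"
proof (cases i)
  case (Suc i')
  then show ?thesis using assms[of i'] by (simp add: frame_Suc(2))
qed (simp add: frame_0)

lemma frenet_vector_orthogonal:
  fixes g :: "real \<Rightarrow> 'a::real_inner"
  assumes I: "open I" "s \<in> I" and "j \<le> i"
    and diff: "\<And>l y. l \<le> i \<Longrightarrow> y \<in> I \<Longrightarrow> ufr g l differentiable at y"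
    and ON: "\<And>l l' y. l \<le> i \<Longrightarrow> l' \<le> i \<Longrightarrow> y \<in> I \<Longrightarrow>
      ufr g l y \<bullet> ufr g l' y = (if l = l' then 1 else 0)"
  shows "frenet_vector g i s \<bullet> ufr g j s = 0"
proof -
  have deriv_ij: "ufr g i s \<bullet> vderiv (ufr g j) s + vderiv (ufr g i) s \<bullet> ufr g j s = 0"
    using assms by (intro inner_constant_on_derivative[OF I _ _ ON]) auto
  have prev_j: "ufr_prev g i s \<bullet> ufr g j s = (if i = Suc j then 1 else 0)"
    using assms by (intro ufr_prev_inner_ufr) auto
  show ?thesis
  proof (cases "j = i")
    case True
    then have "vderiv (ufr g i) s \<bullet> ufr g i s = 0" using deriv_ij by (simp add: inner_commute)
    then show ?thesis using prev_j True by (simp add: frenet_vector_def inner_add_left)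
  next
    case False
    have "ufr_prev g j s \<bullet> ufr g i s = 0"
      using assms False by (intro ufr_prev_inner_ufr[THEN trans]) auto
    moreover have "ufr g i s \<bullet> ufr g (Suc j) s = (if i = Suc j then 1 else 0)"
      using assms False by auto
    ultimately have "ufr g i s \<bullet> ufr g (Suc j) s = (if i = Suc j then 1 else 0)"
      and "ufr g i s \<bullet> ufr_prev g j s = 0"
      by (simp_all add: inner_commute)
    then have "ufr g i s \<bullet> vderiv (ufr g j) s = (if i = Suc j then kap g i s else 0)"
      by (simp add: frenet_equation inner_diff_right)
    then show ?thesis using deriv_ij prev_j by (auto simp: frenet_vector_def inner_add_left)
  qed
qed

lemma frame_orthonormal:
  fixes g :: "real \<Rightarrow> 'a::real_inner"
  assumes I: "open I" and g: "infinitely_differentiable_on I g"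
    and kap_pos: "\<And>j s. 1 \<le> j \<Longrightarrow> j \<le> m \<Longrightarrow> s \<in> I \<Longrightarrow> kap g j s > 0"
    and unit: "\<And>s. s \<in> I \<Longrightarrow> norm (g s) = 1"
  shows "i \<le> m \<Longrightarrow> j \<le> i \<Longrightarrow> l \<le> i \<Longrightarrow> s \<in> I \<Longrightarrow>
    ufr g j s \<bullet> ufr g l s = (if j = l then 1 else 0)"
proof (induction i arbitrary: j l s)
  case 0
  then show ?case using unit[of s] by (simp add: frame_0 dot_square_norm)
next
  case (Suc i)
  have diff: "ufr g l differentiable at y" if "l \<le> i" "y \<in> I" for l y
  proof -
    have "infinitely_differentiable_on I (ufr g l)"
      using frame_infinitely_differentiable_on[OF I g kap_pos, of l] that(1) Suc.prems(1) by simp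
    then show ?thesis using that(2) by (rule infinitely_differentiable_onD)
  qed
  have new_orth: "ufr g (Suc i) y \<bullet> ufr g l y = 0" if "l \<le> i" "y \<in> I" for l y
    using frenet_vector_orthogonal[OF I(1) that(2) that(1) diff Suc.IH] Suc.prems(1)
    by (simp add: frame_Suc)
  have "frenet_vector g i y \<noteq> 0" if "y \<in> I" for y
    using kap_pos[of "Suc i" y] Suc.prems(1) that by (auto simp: frame_Suc)
  then have new_unit: "ufr g (Suc i) y \<bullet> ufr g (Suc i) y = 1" if "y \<in> I" for y
    using that by (simp add: frame_Suc dot_square_norm)
  consider "j \<le> i" "l \<le> i" | "j = Suc i" "l = Suc i" | "j = Suc i" "l \<le> i" | "j \<le> i" "l = Suc i"
    using Suc.prems(2,3) by (metis le_SucE)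
  then show ?case
  proof cases
    case 1
    then show ?thesis using Suc.IH[of j l s] Suc.prems(1,4) by simp
  next
    case 2
    then show ?thesis using new_unit[OF Suc.prems(4)] by simp
  next
    case 3
    then show ?thesis using new_orth[of l s] Suc.prems(4) by simp
  next
    case 4
    then show ?thesis
      using new_orth[of j s] Suc.prems(4) inner_commute[of "ufr g j s" "ufr g (Suc i) s"] by simp
  qed
qed

section \<open>The dual curve\<close>

definition frame_matrix :: "nat \<Rightarrow> (nat \<Rightarrow> 'm::finite) \<Rightarrow> (nat \<Rightarrow> real^'m) \<Rightarrow> real^'m \<Rightarrow> real^'m^'m" where
  "frame_matrix n idx u v = (\<chi> a. (let j = inv_into {..n} idx a in if j = n then v else u j))"

context
  fixes n :: nat and idx :: "nat \<Rightarrow> 'm::finite"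
  assumes bij: "bij_betw idx {..n} (UNIV :: 'm set)"
begin

lemma inv_into_idx:
  "inv_into {..n} idx a \<le> n" "idx (inv_into {..n} idx a) = a" "inv_into {..n} idx (idx n) = n"
proof -
  show "inv_into {..n} idx a \<le> n"
    using bij_betw_apply[OF bij_betw_inv_into[OF bij]] by simp
  show "idx (inv_into {..n} idx a) = a"
    by (rule bij_betw_inv_into_right[OF bij]) simp
  show "inv_into {..n} idx (idx n) = n"
    by (rule bij_betw_inv_into_left[OF bij]) simp
qed

lemma inv_into_idx_less: "a \<noteq> idx n \<Longrightarrow> inv_into {..n} idx a < n"
  using inv_into_idx(1,2)[of a] by (cases "inv_into {..n} idx a = n") auto

lemma frame_matrix_row:
  "frame_matrix n idx u v $ a = (if a = idx n then v else u (inv_into {..n} idx a))"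
  using inv_into_idx_less[of a] inv_into_idx(3) by (auto simp: frame_matrix_def Let_def)

lemma orthogonal_frame_matrix:
  fixes u :: "nat \<Rightarrow> real^'m"
  assumes ON: "\<And>j l. j < n \<Longrightarrow> l < n \<Longrightarrow> u j \<bullet> u l = (if j = l then 1 else 0)"
    and perp: "\<And>i. i < n \<Longrightarrow> u i \<bullet> v = 0" and unit: "norm v = 1"
  shows "orthogonal_matrix (frame_matrix n idx u v)"
proof -
  have row: "row a (frame_matrix n idx u v) = frame_matrix n idx u v $ a" for a
    by (simp add: row_def vec_eq_iff)
  have inj: "inv_into {..n} idx a = inv_into {..n} idx c \<Longrightarrow> a = c" for a c
    using inv_into_idx(2) by metis
  have "norm (frame_matrix n idx u v $ a) = 1" for a
    using unit ON[OF inv_into_idx_less inv_into_idx_less, of a a]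
    by (auto simp: frame_matrix_row norm_eq_1)
  moreover have "orthogonal (frame_matrix n idx u v $ a) (frame_matrix n idx u v $ c)" if "a \<noteq> c" for a c
    using that perp inv_into_idx_less ON[OF inv_into_idx_less inv_into_idx_less, of a c] inj[of a c]
    by (auto simp: frame_matrix_row orthogonal_def inner_commute)
  ultimately show ?thesis unfolding orthogonal_matrix_orthonormal_rows row by blast
qed

lemma det_frame_matrix_scaleR:
  "det (frame_matrix n idx u (c *\<^sub>R v)) = c * det (frame_matrix n idx u v)"
proof -
  have "frame_matrix n idx u (c *\<^sub>R v) = (\<chi> i. if i = idx n then c *s v else frame_matrix n idx u v $ i)"
    and "frame_matrix n idx u v = (\<chi> i. if i = idx n then v else frame_matrix n idx u v $ i)"
    by (simp_all add: vec_eq_iff frame_matrix_row scalar_mult_eq_scaleR)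
  then show ?thesis
    using det_row_mul[of "idx n" c "\<lambda>i. v" "\<lambda>i. frame_matrix n idx u v $ i"] by metis
qed

lemma completing_unit_vector_ex1:
  fixes u :: "nat \<Rightarrow> real^'m"
  assumes card: "CARD('m) = Suc n"
    and ON: "\<And>j l. j < n \<Longrightarrow> l < n \<Longrightarrow> u j \<bullet> u l = (if j = l then 1 else 0)"
  shows "\<exists>!v. (\<forall>i<n. u i \<bullet> v = 0) \<and> norm v = 1 \<and> det (frame_matrix n idx u v) = 1"
proof -
  have "span (u ` {..<n}) \<noteq> UNIV"
  proof
    assume "span (u ` {..<n}) = UNIV"
    then have "dim (UNIV :: (real^'m) set) \<le> n"
      using dim_le_card[of UNIV "u ` {..<n}"] card_image_le[of "{..<n}" u] by simp
    then show False using card by simp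
  qed
  then obtain a :: "real^'m" where a: "a \<noteq> 0" "\<And>x. x \<in> span (u ` {..<n}) \<Longrightarrow> a \<bullet> x = 0"
    using span_not_UNIV_orthogonal by blast
  define w where "w = a /\<^sub>R norm a"
  have "a \<bullet> u i = 0" if "i < n" for i
    using that by (simp add: a(2) span_base)
  then have w: "\<forall>i<n. u i \<bullet> w = 0" "norm w = 1"
    using a(1) by (simp_all add: w_def inner_commute)
  have "det (frame_matrix n idx u w) = 1 \<or> det (frame_matrix n idx u w) = -1"
    using w by (intro det_orthogonal_matrix orthogonal_frame_matrix ON) auto
  then obtain v where v: "\<forall>i<n. u i \<bullet> v = 0" "norm v = 1" "det (frame_matrix n idx u v) = 1"
  proof
    assume "det (frame_matrix n idx u w) = -1"
    then have "det (frame_matrix n idx u ((-1) *\<^sub>R w)) = 1"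
      using det_frame_matrix_scaleR[of u "-1" w] by simp
    then show thesis using that[of "-w"] w by simp
  qed (use w that in auto)
  moreover have "v' = v" if v': "\<forall>i<n. u i \<bullet> v' = 0" "norm v' = 1" "det (frame_matrix n idx u v') = 1" for v'
  proof -
    let ?Q = "frame_matrix n idx u v"
    have "?Q *v v' = (v \<bullet> v') *\<^sub>R axis (idx n) 1"
      using v'(1) inv_into_idx_less
      by (auto simp: vec_eq_iff matrix_vector_mul_component frame_matrix_row axis_def)
    then have "transpose ?Q *v (?Q *v v') = (v \<bullet> v') *\<^sub>R (transpose ?Q *v axis (idx n) 1)"
      by (simp add: matrix_vector_mult_scaleR)
    also have "transpose ?Q *v axis (idx n) 1 = v"
      by (simp add: matrix_vector_mult_basis row_def vec_eq_iff frame_matrix_row)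
    finally have "transpose ?Q *v (?Q *v v') = (v \<bullet> v') *\<^sub>R v" .
    moreover have "transpose ?Q *v (?Q *v v') = v'"
      using orthogonal_frame_matrix[OF ON _ v(2)] v(1)
      by (simp add: matrix_vector_mul_assoc orthogonal_matrix)
    ultimately have v'_eq: "v' = (v \<bullet> v') *\<^sub>R v" by simp
    then have "v \<bullet> v' = 1"
      using v'(3) v(3) det_frame_matrix_scaleR[of u "v \<bullet> v'" v] by simp
    then show ?thesis using v'_eq by simp
  qed
  ultimately show ?thesis by blast
qed

end

lemma dual_curve_unit_orthogonal:
  fixes idx :: "nat \<Rightarrow> 'm::finite"
  assumes "bij_betw idx {..n} UNIV" "CARD('m) = Suc n"
    and "\<And>j l. j < n \<Longrightarrow> l < n \<Longrightarrow> ufr g j s \<bullet> ufr g l s = (if j = l then 1 else 0)"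
  shows "norm (dual_curve n idx g s) = 1" "\<And>i. i < n \<Longrightarrow> ufr g i s \<bullet> dual_curve n idx g s = 0"
proof -
  have "dual_curve n idx g s = (THE v. (\<forall>i<n. ufr g i s \<bullet> v = 0) \<and> norm v = 1 \<and>
      det (frame_matrix n idx (\<lambda>j. ufr g j s) v) = 1)"
    unfolding dual_curve_def frame_matrix_def ..
  with theI'[OF completing_unit_vector_ex1[OF assms]]
  show "norm (dual_curve n idx g s) = 1" "\<And>i. i < n \<Longrightarrow> ufr g i s \<bullet> dual_curve n idx g s = 0"
    by simp_all
qed

lemma spherical_unit_speed_frame:
  assumes I: "open I" and \<gamma>: "spherical_unit_speed n I \<gamma>"
  shows "\<And>j. j < n \<Longrightarrow> infinitely_differentiable_on I (ufr \<gamma> j)"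
    and "\<And>j l s. j < n \<Longrightarrow> l < n \<Longrightarrow> s \<in> I \<Longrightarrow>
      ufr \<gamma> j s \<bullet> ufr \<gamma> l s = (if j = l then 1 else 0)"
proof -
  have g: "infinitely_differentiable_on I \<gamma>"
    using \<gamma> smooth_on_imp_infinitely_differentiable_on[OF I] unfolding spherical_unit_speed_def by blast
  have kap_pos: "\<And>j s. 1 \<le> j \<Longrightarrow> j \<le> n - 1 \<Longrightarrow> s \<in> I \<Longrightarrow> kap \<gamma> j s > 0"
    and unit: "\<And>s. s \<in> I \<Longrightarrow> norm (\<gamma> s) = 1"
    using \<gamma> by (auto simp: spherical_unit_speed_def)
  show "\<And>j. j < n \<Longrightarrow> infinitely_differentiable_on I (ufr \<gamma> j)"
    using frame_infinitely_differentiable_on[OF I g kap_pos] by simp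
  show "\<And>j l s. j < n \<Longrightarrow> l < n \<Longrightarrow> s \<in> I \<Longrightarrow>
      ufr \<gamma> j s \<bullet> ufr \<gamma> l s = (if j = l then 1 else 0)"
    by (rule frame_orthonormal[OF I g kap_pos unit, where i="n - 1"]) auto
qed

lemma dual_curve_derivative_orthogonal:
  fixes idx :: "nat \<Rightarrow> 'm::finite" and \<gamma> :: "real \<Rightarrow> real^'m"
  assumes bij: "bij_betw idx {..n} UNIV" and card: "CARD('m) = Suc n"
    and I: "open I" and \<gamma>: "spherical_unit_speed n I \<gamma>" and s: "s \<in> I"
    and diff: "dual_curve n idx \<gamma> differentiable at s" and j: "j + 2 \<le> n"
  shows "ufr \<gamma> j s \<bullet> vderiv (dual_curve n idx \<gamma>) s = 0"
proof -
  let ?U = "dual_curve n idx \<gamma>"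
  have perp: "ufr \<gamma> i y \<bullet> ?U y = 0" if "y \<in> I" "i < n" for i y
    using dual_curve_unit_orthogonal(2)[OF bij card spherical_unit_speed_frame(2)[OF I \<gamma>]] that
    by blast
  have "ufr \<gamma> j differentiable at s"
    using infinitely_differentiable_onD[OF spherical_unit_speed_frame(1)[OF I \<gamma>] s] j by simp
  then have "ufr \<gamma> j s \<bullet> vderiv ?U s + vderiv (ufr \<gamma> j) s \<bullet> ?U s = 0"
    using perp j by (intro inner_constant_on_derivative[OF I s _ diff, of _ 0]) auto
  moreover have "ufr_prev \<gamma> j s \<bullet> ?U s = 0"
    using perp[OF s, of "j - 1"] j by (cases j) (auto simp: frame_0 frame_Suc)
  ultimately show ?thesis
    using perp[OF s, of "Suc j"] j by (simp add: frenet_equation inner_diff_left)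
qed

lemma sub_sphere_orthogonal_dual_curve:
  fixes idx :: "nat \<Rightarrow> 'm::finite" and \<gamma> :: "real \<Rightarrow> real^'m"
  assumes bij: "bij_betw idx {..n} UNIV" and card: "CARD('m) = Suc n" and n: "2 \<le> n"
    and I: "open I" and \<gamma>: "spherical_unit_speed n I \<gamma>" and s: "s \<in> I"
    and P: "P \<in> sub_sphere n idx \<gamma> (n - 2) s"
  shows "norm P = 1" "P \<bullet> dual_curve n idx \<gamma> s = 0"
    and "dual_curve n idx \<gamma> differentiable at s \<Longrightarrow> P \<bullet> vderiv (dual_curve n idx \<gamma>) s = 0"
proof -
  have P_span: "P \<in> span ((\<lambda>j. ufr \<gamma> j s) ` {..n - 2})" and "norm P = 1"
    using P unfolding sub_sphere_def by auto
  then show "norm P = 1" by simp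
  have "P \<bullet> w = 0" if "\<And>j. j \<le> n - 2 \<Longrightarrow> ufr \<gamma> j s \<bullet> w = 0" for w
  proof -
    have "orthogonal w P"
      by (rule orthogonal_to_span[OF P_span]) (use that in \<open>auto simp: orthogonal_def inner_commute\<close>)
    then show ?thesis by (simp add: orthogonal_def inner_commute)
  qed
  then show "P \<bullet> dual_curve n idx \<gamma> s = 0"
    and "dual_curve n idx \<gamma> differentiable at s \<Longrightarrow> P \<bullet> vderiv (dual_curve n idx \<gamma>) s = 0"
    using dual_curve_unit_orthogonal(2)[OF bij card spherical_unit_speed_frame(2)[OF I \<gamma> _ _ s]]
      dual_curve_derivative_orthogonal[OF bij card I \<gamma> s] n by auto
qed

section \<open>Smooth maps of the sphere near \<open>P\<close>\<close>

lemma smooth_on_family: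
  fixes F :: "('a::real_normed_vector \<Rightarrow> 'b::real_normed_vector) set"
  assumes W: "open W"
    and cont: "\<And>f. f \<in> F \<Longrightarrow> continuous_on W f"
    and deriv: "\<And>f v. f \<in> F \<Longrightarrow> \<exists>g\<in>F. \<forall>x\<in>W. ((\<lambda>t. f (x + t *\<^sub>R v)) has_vector_derivative g x) (at 0)"
    and f: "f \<in> F"
  shows "smooth_on W f"
proof -
  have transfer: "((\<lambda>t. h (x + t *\<^sub>R v)) has_vector_derivative d) (at 0)"
    if "x \<in> W" "\<And>y. y \<in> W \<Longrightarrow> h y = g y" "((\<lambda>t. g (x + t *\<^sub>R v)) has_vector_derivative d) (at 0)"
    for h g :: "'a \<Rightarrow> 'b" and x v d
  proof -
    have "open ((\<lambda>t::real. x + t *\<^sub>R v) -` W)"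
      by (rule continuous_open_vimage[OF W]) (auto intro!: continuous_intros)
    then show ?thesis
      by (rule has_vector_derivative_transform_within_open[OF that(3)]) (use that in auto)
  qed
  have in_F: "\<exists>g\<in>F. \<forall>x\<in>W. dder vs f x = g x" for vs
  proof (induction vs)
    case (Cons v vs)
    then obtain g where g: "g \<in> F" "\<And>x. x \<in> W \<Longrightarrow> dder vs f x = g x" by blast
    obtain h where h: "h \<in> F" "\<And>x. x \<in> W \<Longrightarrow> ((\<lambda>t. g (x + t *\<^sub>R v)) has_vector_derivative h x) (at 0)"
      using deriv[OF g(1)] by blast
    have "dder (v # vs) f x = h x" if "x \<in> W" for x
      using transfer[OF that g(2) h(2)[OF that]] by (simp add: vector_derivative_at)
    then show ?case using h(1) by blast
  qed (use f in auto)
  show ?thesis unfolding smooth_on_def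
  proof (intro allI conjI ballI)
    fix vs
    obtain g where g: "g \<in> F" "\<And>x. x \<in> W \<Longrightarrow> dder vs f x = g x" using in_F by blast
    show "continuous_on W (dder vs f)" using continuous_on_cong cont[OF g(1)] g(2) by metis
    fix x v assume x: "x \<in> W"
    obtain h where "\<And>x. x \<in> W \<Longrightarrow> ((\<lambda>t. g (x + t *\<^sub>R v)) has_vector_derivative h x) (at 0)"
      using deriv[OF g(1)] by blast
    from transfer[OF x g(2) this[OF x]] show "(\<lambda>t. dder vs f (x + t *\<^sub>R v)) differentiable at 0"
      by (rule differentiableI_vector)
  qed
qed

lemma has_vector_derivative_componentwise:
  fixes F :: "real \<Rightarrow> real^'m::finite"
  assumes "\<And>i. ((\<lambda>t. F t $ i) has_vector_derivative d $ i) (at t0)"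
  shows "(F has_vector_derivative d) (at t0)"
proof -
  have "(F has_derivative (\<lambda>h. h *\<^sub>R d)) (at t0 within UNIV)"
  proof (subst has_derivative_componentwise_within, intro ballI)
    fix b :: "real^'m" assume "b \<in> Basis"
    then obtain i where b: "b = axis i 1" by (auto simp: Basis_vec_def)
    show "((\<lambda>x. F x \<bullet> b) has_derivative (\<lambda>x. x *\<^sub>R d \<bullet> b)) (at t0)"
      using assms[of i] unfolding b has_vector_derivative_def by (simp add: inner_axis)
  qed
  then show ?thesis by (simp add: has_vector_derivative_def)
qed

text \<open>Away from \<open>x = -P\<close> this algebra consists of continuous functions and is closed under
  directional derivatives, so maps whose components lie in it are smooth.\<close>

inductive_set inverse_norm_algebra :: "'a::real_inner \<Rightarrow> ('a \<Rightarrow> real) set" for P :: 'a where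
  const: "(\<lambda>x. c) \<in> inverse_norm_algebra P"
| inner: "(\<lambda>x. x \<bullet> c) \<in> inverse_norm_algebra P"
| inverse_norm: "(\<lambda>x. inverse (norm (P + x))) \<in> inverse_norm_algebra P"
| add: "f \<in> inverse_norm_algebra P \<Longrightarrow> g \<in> inverse_norm_algebra P \<Longrightarrow>
    (\<lambda>x. f x + g x) \<in> inverse_norm_algebra P"
| mult: "f \<in> inverse_norm_algebra P \<Longrightarrow> g \<in> inverse_norm_algebra P \<Longrightarrow>
    (\<lambda>x. f x * g x) \<in> inverse_norm_algebra P"

lemma has_real_derivative_inverse_norm_line:
  fixes P x v :: "'a::real_inner"
  assumes "P + x \<noteq> 0"
  shows "((\<lambda>t. inverse (norm (P + (x + t *\<^sub>R v)))) has_real_derivative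
     (-1) * (inverse (norm (P + x)) * (inverse (norm (P + x)) * inverse (norm (P + x)))) *
       (x \<bullet> v + P \<bullet> v)) (at 0)"
proof -
  let ?q = "\<lambda>t. (P + (x + t *\<^sub>R v)) \<bullet> (P + (x + t *\<^sub>R v))"
  have q: "(?q has_real_derivative 2 * ((P + x) \<bullet> v)) (at 0)"
    by (auto intro!: derivative_eq_intros simp: inner_commute algebra_simps)
  have q0: "?q 0 > 0" using assms by simp
  have "((\<lambda>t. sqrt (?q t)) has_real_derivative inverse (sqrt (?q 0)) / 2 * (2 * ((P + x) \<bullet> v))) (at 0)"
    by (rule DERIV_chain2[OF DERIV_real_sqrt[OF q0] q])
  moreover have "sqrt (?q t) = norm (P + (x + t *\<^sub>R v))" for t
    by (simp add: norm_eq_sqrt_inner)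
  ultimately have "((\<lambda>t. norm (P + (x + t *\<^sub>R v))) has_real_derivative ((P + x) \<bullet> v) / norm (P + x)) (at 0)"
    by (simp add: norm_eq_sqrt_inner[symmetric] field_simps)
  moreover have "norm (P + (x + 0 *\<^sub>R v)) \<noteq> 0" using assms by simp
  ultimately show ?thesis
    using DERIV_inverse_fun by (fastforce simp: field_simps inner_add_left power2_eq_square power3_eq_cube)
qed

lemma inverse_norm_algebra_directional_derivative:
  fixes P :: "'a::real_inner"
  shows "f \<in> inverse_norm_algebra P \<Longrightarrow> \<exists>g\<in>inverse_norm_algebra P. \<forall>x. P + x \<noteq> 0 \<longrightarrow>
    ((\<lambda>t. f (x + t *\<^sub>R v)) has_real_derivative g x) (at 0)"
proof (induction rule: inverse_norm_algebra.induct)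
  case (const c)
  show ?case by (rule bexI[where x="\<lambda>x. 0"]) (auto intro: inverse_norm_algebra.const)
next
  case (inner c)
  have "((\<lambda>t. x \<bullet> c + t * (v \<bullet> c)) has_real_derivative v \<bullet> c) (at 0)" for x
    by (auto intro!: derivative_eq_intros)
  then have "((\<lambda>t. (x + t *\<^sub>R v) \<bullet> c) has_real_derivative v \<bullet> c) (at 0)" for x
    by (simp add: inner_add_left)
  then show ?case by (intro bexI[where x="\<lambda>x. v \<bullet> c"] inverse_norm_algebra.const) auto
next
  case inverse_norm
  let ?r = "\<lambda>x. inverse (norm (P + x))"
  have "(\<lambda>x. (-1) * (?r x * (?r x * ?r x)) * (x \<bullet> v + P \<bullet> v)) \<in> inverse_norm_algebra P"
    by (intro inverse_norm_algebra.intros)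
  then show ?case by (rule bexI[rotated]) (use has_real_derivative_inverse_norm_line in auto)
next
  case (add f g)
  then obtain f' g' where fg: "f' \<in> inverse_norm_algebra P" "g' \<in> inverse_norm_algebra P"
    "\<And>x. P + x \<noteq> 0 \<Longrightarrow> ((\<lambda>t. f (x + t *\<^sub>R v)) has_real_derivative f' x) (at 0)"
    "\<And>x. P + x \<noteq> 0 \<Longrightarrow> ((\<lambda>t. g (x + t *\<^sub>R v)) has_real_derivative g' x) (at 0)" by blast
  have "((\<lambda>t. f (x + t *\<^sub>R v) + g (x + t *\<^sub>R v)) has_real_derivative f' x + g' x) (at 0)"
    if "P + x \<noteq> 0" for x using DERIV_add[OF fg(3)[OF that] fg(4)[OF that]] .
  moreover have "(\<lambda>x. f' x + g' x) \<in> inverse_norm_algebra P"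
    using fg(1,2) by (rule inverse_norm_algebra.add)
  ultimately show ?case by (intro bexI[where x="\<lambda>x. f' x + g' x"]) auto
next
  case (mult f g)
  then obtain f' g' where fg: "f' \<in> inverse_norm_algebra P" "g' \<in> inverse_norm_algebra P"
    "\<And>x. P + x \<noteq> 0 \<Longrightarrow> ((\<lambda>t. f (x + t *\<^sub>R v)) has_real_derivative f' x) (at 0)"
    "\<And>x. P + x \<noteq> 0 \<Longrightarrow> ((\<lambda>t. g (x + t *\<^sub>R v)) has_real_derivative g' x) (at 0)" by blast
  have "((\<lambda>t. f (x + t *\<^sub>R v) * g (x + t *\<^sub>R v)) has_real_derivative f' x * g x + g' x * f x) (at 0)"
    if "P + x \<noteq> 0" for x using DERIV_mult[OF fg(3)[OF that] fg(4)[OF that]] by simp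
  moreover have "(\<lambda>x. f' x * g x + g' x * f x) \<in> inverse_norm_algebra P"
    using fg(1,2) mult.hyps by (intro inverse_norm_algebra.add inverse_norm_algebra.mult)
  ultimately show ?case by (intro bexI[where x="\<lambda>x. f' x * g x + g' x * f x"]) auto
qed

lemma inverse_norm_algebra_continuous:
  fixes P :: "'a::real_inner"
  shows "f \<in> inverse_norm_algebra P \<Longrightarrow> P + x \<noteq> 0 \<Longrightarrow> isCont f x"
proof (induction rule: inverse_norm_algebra.induct)
  case inverse_norm
  then show ?case by (intro continuous_intros) auto
next
  case (add f g)
  then show ?case by (intro continuous_intros) auto
next
  case (mult f g)
  then show ?case by (intro continuous_intros) auto
qed (intro continuous_intros)+

lemma smooth_on_inverse_norm_algebra:
  fixes P :: "real^'m::finite" and f :: "real^'m \<Rightarrow> real^'m"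
  assumes W: "open W" and nz: "\<And>x. x \<in> W \<Longrightarrow> P + x \<noteq> 0"
    and f: "\<And>i. (\<lambda>x. f x $ i) \<in> inverse_norm_algebra P"
  shows "smooth_on W f"
proof (rule smooth_on_family[OF W, where F="{f. \<forall>i. (\<lambda>x. f x $ i) \<in> inverse_norm_algebra P}"])
  show "f \<in> {f. \<forall>i. (\<lambda>x. f x $ i) \<in> inverse_norm_algebra P}" using f by blast
next
  fix g :: "real^'m \<Rightarrow> real^'m" assume g: "g \<in> {f. \<forall>i. (\<lambda>x. f x $ i) \<in> inverse_norm_algebra P}"
  have "continuous_on W (\<lambda>x. \<chi> i. g x $ i)"
  proof (rule continuous_on_vec_lambda)
    fix i
    show "continuous_on W (\<lambda>x. g x $ i)"
      by (rule continuous_at_imp_continuous_on) (use inverse_norm_algebra_continuous g nz in blast)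
  qed
  then show "continuous_on W g" by simp
next
  fix g :: "real^'m \<Rightarrow> real^'m" and v
  assume g: "g \<in> {f. \<forall>i. (\<lambda>x. f x $ i) \<in> inverse_norm_algebra P}"
  have "\<forall>i. \<exists>h. h \<in> inverse_norm_algebra P \<and>
      (\<forall>x. P + x \<noteq> 0 \<longrightarrow> ((\<lambda>t. g (x + t *\<^sub>R v) $ i) has_real_derivative h x) (at 0))"
    using inverse_norm_algebra_directional_derivative g by blast
  then obtain G where G: "\<And>i. G i \<in> inverse_norm_algebra P"
    "\<And>i x. P + x \<noteq> 0 \<Longrightarrow> ((\<lambda>t. g (x + t *\<^sub>R v) $ i) has_real_derivative G i x) (at 0)"
    by metis
  have "((\<lambda>t. g (x + t *\<^sub>R v)) has_vector_derivative (\<chi> i. G i x)) (at 0)" if "x \<in> W" for x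
    using G(2) nz[OF that]
    by (intro has_vector_derivative_componentwise)
      (simp add: has_real_derivative_iff_has_vector_derivative[symmetric])
  then show "\<exists>h\<in>{f. \<forall>i. (\<lambda>x. f x $ i) \<in> inverse_norm_algebra P}.
      \<forall>x\<in>W. ((\<lambda>t. g (x + t *\<^sub>R v)) has_vector_derivative h x) (at 0)"
    using G(1) by (intro bexI[where x="\<lambda>x. \<chi> i. G i x"]) auto
qed

definition midpoint_projection :: "real^'m::finite \<Rightarrow> real^'m \<Rightarrow> real^'m" where
  "midpoint_projection P x = inverse (norm (P + x)) *\<^sub>R (P + x)"

definition reflection_through :: "real^'m::finite \<Rightarrow> real^'m \<Rightarrow> real^'m" where
  "reflection_through P y = (2 * (P \<bullet> y)) *\<^sub>R y - P"

lemma smooth_on_midpoint_projection: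
  assumes "open W" "\<And>x. x \<in> W \<Longrightarrow> P + x \<noteq> 0"
  shows "smooth_on W (midpoint_projection P)"
proof (rule smooth_on_inverse_norm_algebra[OF assms])
  fix i
  have "(\<lambda>x. inverse (norm (P + x)) * ((\<lambda>x. P $ i) x + x \<bullet> axis i 1)) \<in> inverse_norm_algebra P"
    by (intro inverse_norm_algebra.intros)
  then show "(\<lambda>x. midpoint_projection P x $ i) \<in> inverse_norm_algebra P"
    by (simp add: midpoint_projection_def inner_axis algebra_simps)
qed

lemma smooth_on_reflection_through:
  assumes "open W" "\<And>x. x \<in> W \<Longrightarrow> P + x \<noteq> 0"
  shows "smooth_on W (reflection_through P)"
proof (rule smooth_on_inverse_norm_algebra[OF assms])
  fix i
  have "(\<lambda>y. ((\<lambda>y. 2) y * (y \<bullet> P)) * (y \<bullet> axis i 1) + (\<lambda>y. - (P $ i)) y) \<in> inverse_norm_algebra P"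
    by (intro inverse_norm_algebra.intros)
  then show "(\<lambda>x. reflection_through P x $ i) \<in> inverse_norm_algebra P"
    by (simp add: reflection_through_def inner_axis algebra_simps inner_commute)
qed

lemma midpoint_projection_on_sphere:
  assumes P: "norm P = 1" and x: "norm x = 1" and b: "-1 < P \<bullet> x"
  shows "norm (midpoint_projection P x) = 1" "0 < P \<bullet> midpoint_projection P x"
    and "reflection_through P (midpoint_projection P x) = x"
proof -
  define N where "N = norm (P + x)"
  have PP: "P \<bullet> P = 1" and xx: "x \<bullet> x = 1" using P x by (simp_all add: dot_square_norm)
  have "N * N = (P + x) \<bullet> (P + x)"
    by (simp add: N_def flip: power2_norm_eq_inner power2_eq_square)
  also have "\<dots> = 2 * (1 + P \<bullet> x)"
    using PP xx by (simp add: inner_add_left inner_add_right inner_commute[of x P])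
  finally have NN: "2 * (1 + P \<bullet> x) = N * N" ..
  then have "N \<noteq> 0" using b by auto
  then have N: "N > 0" by (simp add: N_def)
  have proj: "midpoint_projection P x = inverse N *\<^sub>R (P + x)"
    by (simp add: midpoint_projection_def N_def)
  have Pproj: "P \<bullet> midpoint_projection P x = (1 + P \<bullet> x) / N"
    using PP by (simp add: proj inner_add_right divide_inverse)
  show "norm (midpoint_projection P x) = 1"
    using N by (simp add: proj N_def[symmetric])
  show "0 < P \<bullet> midpoint_projection P x"
    using b N by (simp add: Pproj)
  have "2 * (P \<bullet> midpoint_projection P x) * inverse N = 1"
    using N NN by (simp add: Pproj)
  then show "reflection_through P (midpoint_projection P x) = x"
    by (simp add: reflection_through_def proj)
qed

lemma reflection_through_on_sphere:
  assumes P: "norm P = 1" and y: "norm y = 1" and a: "0 < P \<bullet> y"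
  shows "norm (reflection_through P y) = 1" "-1 < P \<bullet> reflection_through P y"
    and "midpoint_projection P (reflection_through P y) = y"
proof -
  have PP: "P \<bullet> P = 1" and yy: "y \<bullet> y = 1" using P y by (simp_all add: dot_square_norm)
  have "reflection_through P y \<bullet> reflection_through P y = 1"
    using PP yy by (simp add: reflection_through_def inner_diff_left inner_diff_right inner_commute[of y P])
  then show "norm (reflection_through P y) = 1" by (simp add: norm_eq_1)
  have "P \<bullet> reflection_through P y = 2 * (P \<bullet> y) * (P \<bullet> y) - 1"
    using PP by (simp add: reflection_through_def inner_diff_right)
  then show "-1 < P \<bullet> reflection_through P y"
    using a by simp
  have "P + reflection_through P y = (2 * (P \<bullet> y)) *\<^sub>R y"
    by (simp add: reflection_through_def)
  moreover have "norm ((2 * (P \<bullet> y)) *\<^sub>R y) = 2 * (P \<bullet> y)" using y a by simp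
  ultimately show "midpoint_projection P (reflection_through P y) = y"
    using a by (simp add: midpoint_projection_def)
qed

lemma diffeo_germ_midpoint_projection:
  fixes P :: "real^'m::finite"
  assumes P: "norm P = 1"
  shows "diffeo_germ (sphere 0 1) P P (midpoint_projection P)"
proof -
  let ?U = "{x. -1 < P \<bullet> x}" and ?V = "{y. 0 < P \<bullet> y}"
  have open_UV: "open ?U" "open ?V"
    by (auto intro!: open_Collect_less continuous_intros)
  have antipode: "P + x \<noteq> 0" if "-1 < P \<bullet> x" for x
  proof
    assume "P + x = 0"
    then have "x = - P" by (simp add: add_eq_0_iff)
    with that P show False by (simp add: dot_square_norm)
  qed
  have "midpoint_projection P P = P"
    using P by (simp add: midpoint_projection_def scaleR_2[symmetric])
  moreover have "P \<in> ?U" "P \<in> ?V" using P by (simp_all add: dot_square_norm)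
  moreover have "smooth_on ?U (midpoint_projection P)" "smooth_on ?V (reflection_through P)"
    using open_UV antipode by (auto intro!: smooth_on_midpoint_projection smooth_on_reflection_through)
  moreover have "\<forall>x\<in>sphere 0 1 \<inter> ?U. midpoint_projection P x \<in> sphere 0 1 \<inter> ?V \<and>
      reflection_through P (midpoint_projection P x) = x"
    using midpoint_projection_on_sphere[OF P] by simp
  moreover have "\<forall>y\<in>sphere 0 1 \<inter> ?V. reflection_through P y \<in> sphere 0 1 \<inter> ?U \<and>
      midpoint_projection P (reflection_through P y) = y"
    using reflection_through_on_sphere[OF P] by simp
  ultimately show ?thesis
    unfolding diffeo_germ_def using open_UV
    by (intro conjI exI[where x="?U"] exI[where x="?V"] exI[where x="reflection_through P"]) auto
qed

section \<open>Germs with vanishing derivative\<close>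

lemma smooth_on_line_increment_bound:
  fixes \<psi> :: "'a::real_normed_vector \<Rightarrow> 'b::real_normed_vector"
  assumes sm: "smooth_on W \<psi>"
    and seg: "\<And>t. t \<in> closed_segment 0 c \<Longrightarrow> x + t *\<^sub>R v \<in> W \<and> norm (dder [v] \<psi> (x + t *\<^sub>R v)) \<le> M"
  shows "norm (\<psi> (x + c *\<^sub>R v) - \<psi> x) \<le> M * \<bar>c\<bar>"
proof -
  let ?h = "\<lambda>t. \<psi> (x + t *\<^sub>R v)"
  have deriv: "(?h has_vector_derivative dder [v] \<psi> (x + t *\<^sub>R v)) (at t)"
    if "t \<in> closed_segment 0 c" for t
  proof -
    have "((\<lambda>s. \<psi> ((x + t *\<^sub>R v) + s *\<^sub>R v)) has_vector_derivative dder [v] \<psi> (x + t *\<^sub>R v)) (at 0)"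
      using smooth_on_has_directional_derivative[OF sm, of _ "[]"] seg[OF that] by simp
    then show ?thesis
      by (simp add: has_vector_derivative_shift_0[of ?h] algebra_simps)
  qed
  have "norm (?h c - ?h 0) \<le> M * norm (c - 0)"
  proof (intro differentiable_bound[where f'="\<lambda>t u. u *\<^sub>R dder [v] \<psi> (x + t *\<^sub>R v)"])
    show "(?h has_derivative (\<lambda>u. u *\<^sub>R dder [v] \<psi> (x + t *\<^sub>R v))) (at t within closed_segment 0 c)"
      if "t \<in> closed_segment 0 c" for t
      using deriv[OF that] unfolding has_vector_derivative_def
      by (rule has_derivative_at_withinI)
    show "onorm (\<lambda>u. u *\<^sub>R dder [v] \<psi> (x + t *\<^sub>R v)) \<le> M" if "t \<in> closed_segment 0 c" for t
      using seg[OF that] onorm_scaleR_left[OF bounded_linear_ident, of "dder [v] \<psi> (x + t *\<^sub>R v)"]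
        onorm_id[where 'a=real] by simp
  qed auto
  then show ?thesis by simp
qed

lemma smooth_on_partials_bounded:
  fixes \<psi> :: "real^'m::finite \<Rightarrow> 'b::real_normed_vector"
  assumes "smooth_on W \<psi>" "compact K" "K \<subseteq> W"
  shows "\<exists>M>0. \<forall>i. \<forall>z\<in>K. norm (dder [axis i 1] \<psi> z) \<le> M"
proof -
  have cont: "continuous_on W (dder vs \<psi>)" for vs
    using assms(1) by (simp add: smooth_on_def)
  have "compact (dder [axis i 1] \<psi> ` K)" for i
    by (rule compact_continuous_image[OF continuous_on_subset[OF cont assms(3)] assms(2)])
  then have "bounded (\<Union>i. dder [axis i 1] \<psi> ` K)"
    by (intro bounded_UN) (simp_all add: compact_imp_bounded)
  then obtain M where "M > 0" "\<forall>y\<in>(\<Union>i. dder [axis i 1] \<psi> ` K). norm y \<le> M"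
    unfolding bounded_pos by (elim exE conjE) (rule that)
  then show ?thesis by (intro exI[of _ M]) auto
qed

lemma smooth_on_lipschitz_at:
  fixes \<psi> :: "real^'m::finite \<Rightarrow> 'b::real_normed_vector"
  assumes W: "open W" and p: "p \<in> W" and sm: "smooth_on W \<psi>"
  shows "\<exists>L \<delta>. \<delta> > 0 \<and> (\<forall>y. norm (y - p) < \<delta> \<longrightarrow> norm (\<psi> y - \<psi> p) \<le> L * norm (y - p))"
proof -
  obtain \<delta> where \<delta>: "\<delta> > 0" "cball p \<delta> \<subseteq> W" using open_contains_cball W p by blast
  obtain M where M: "M > 0" "\<And>i z. z \<in> cball p \<delta> \<Longrightarrow> norm (dder [axis i 1] \<psi> z) \<le> M"
    using smooth_on_partials_bounded[OF sm compact_cball \<delta>(2)] by blast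
  text \<open>Change the coordinates of \<open>p\<close> one at a time; each move stays in \<open>cball p \<delta>\<close>
    and costs at most \<open>M \<parallel>y - p\<parallel>\<close> by the mean value theorem.\<close>
  have "finite S \<Longrightarrow> \<forall>y. norm (y - p) < \<delta> \<and> (\<forall>j. j \<notin> S \<longrightarrow> y $ j = p $ j) \<longrightarrow>
      norm (\<psi> y - \<psi> p) \<le> (M * card S) * norm (y - p)" for S
  proof (induction S rule: finite_induct)
    case empty
    then show ?case by (simp flip: vec_eq_iff)
  next
    case (insert i S)
    show ?case
    proof (intro allI impI, elim conjE)
      fix y assume y: "norm (y - p) < \<delta>" and out: "\<forall>j. j \<notin> insert i S \<longrightarrow> y $ j = p $ j"
      define y' where "y' = (\<chi> j. if j = i then p $ i else y $ j)"
      define c where "c = y $ i - p $ i"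
      have y'_c: "y' + c *\<^sub>R axis i 1 = y"
        by (simp add: y'_def c_def vec_eq_iff axis_def)
      have near: "norm ((y' + t *\<^sub>R axis i 1) - p) \<le> norm (y - p)" if "\<bar>t\<bar> \<le> \<bar>c\<bar>" for t
        using that by (intro norm_le_componentwise_cart) (auto simp: y'_def c_def axis_def)
      have "norm (\<psi> y - \<psi> y') \<le> M * \<bar>c\<bar>"
      proof -
        have "y' + t *\<^sub>R axis i 1 \<in> cball p \<delta>" if "t \<in> closed_segment 0 c" for t
          using near[of t] that y
          by (auto simp: closed_segment_eq_real_ivl dist_norm norm_minus_commute split: if_splits)
        then have seg: "y' + t *\<^sub>R axis i 1 \<in> W \<and> norm (dder [axis i 1] \<psi> (y' + t *\<^sub>R axis i 1)) \<le> M"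
          if "t \<in> closed_segment 0 c" for t
          using that \<delta>(2) M(2) by blast
        from smooth_on_line_increment_bound[OF sm, where c=c and x=y' and v="axis i 1", OF seg]
        show ?thesis
          unfolding y'_c .
      qed
      also have "\<dots> \<le> M * norm (y - p)"
        using component_le_norm_cart[of "y - p" i] M(1) by (simp add: c_def)
      finally have step: "norm (\<psi> y - \<psi> y') \<le> M * norm (y - p)" .
      have "norm (y' - p) < \<delta>" using near[of 0] y by simp
      moreover have "\<forall>j. j \<notin> S \<longrightarrow> y' $ j = p $ j" using out by (simp add: y'_def)
      ultimately have "norm (\<psi> y' - \<psi> p) \<le> (M * card S) * norm (y' - p)"
        using insert.IH by blast
      also have "\<dots> \<le> (M * card S) * norm (y - p)"
        using near[of 0] M(1) by (intro mult_left_mono) auto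
      finally have "norm (\<psi> y - \<psi> p) \<le> M * norm (y - p) + (M * card S) * norm (y - p)"
        using step norm_diff_triangle_le[of "\<psi> y" "\<psi> y'" _ "\<psi> p"] by simp
      then show "norm (\<psi> y - \<psi> p) \<le> (M * card (insert i S)) * norm (y - p)"
        using insert.hyps by (simp add: algebra_simps)
    qed
  qed
  from this[of UNIV] \<delta>(1) show ?thesis by auto
qed

lemma has_vector_derivative_zero_if_dominated:
  fixes f :: "real \<Rightarrow> 'a::real_normed_vector" and g :: "real \<Rightarrow> 'b::real_normed_vector"
  assumes g: "(g has_vector_derivative 0) (at x)" and L: "L \<ge> 0" and d0: "d0 > 0"
    and dom: "\<And>y. \<bar>y - x\<bar> < d0 \<Longrightarrow> norm (f y - f x) \<le> L * norm (g y - g x)"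
  shows "(f has_vector_derivative 0) (at x)"
proof -
  have g': "\<forall>e>0. \<exists>d>0. \<forall>y. norm (y - x) < d \<longrightarrow> norm (g y - g x) \<le> e * norm (y - x)"
    using g unfolding has_vector_derivative_def has_derivative_at_alt by simp
  have "\<exists>d>0. \<forall>y. norm (y - x) < d \<longrightarrow> norm (f y - f x - (y - x) *\<^sub>R 0) \<le> e * norm (y - x)"
    if e: "e > 0" for e
  proof -
    obtain d where d: "d > 0" "\<And>y. norm (y - x) < d \<Longrightarrow> norm (g y - g x) \<le> e / (L + 1) * norm (y - x)"
      using g' e L by (metis divide_pos_pos add_nonneg_pos zero_less_one)
    have "norm (f y - f x) \<le> e * norm (y - x)" if y: "norm (y - x) < min d d0" for y
    proof -
      have "norm (f y - f x) \<le> L * norm (g y - g x)"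
        using dom[of y] y by simp
      also have "\<dots> \<le> L * (e / (L + 1) * norm (y - x))"
        using d(2)[of y] y L by (intro mult_left_mono) auto
      also have "\<dots> = L / (L + 1) * (e * norm (y - x))"
        by simp
      also have "\<dots> \<le> 1 * (e * norm (y - x))"
        using L e by (intro mult_right_mono) auto
      finally show ?thesis by simp
    qed
    then show ?thesis using d(1) d0 by (intro exI[of _ "min d d0"]) auto
  qed
  then show ?thesis unfolding has_vector_derivative_def has_derivative_at_alt
    by (simp add: bounded_linear_scaleR_left)
qed

lemma smooth_on_compose_zero_derivative:
  fixes \<psi> :: "real^'m::finite \<Rightarrow> 'b::real_normed_vector" and f :: "real \<Rightarrow> real^'m"
  assumes "open W" "f s0 \<in> W" "smooth_on W \<psi>" and f: "(f has_vector_derivative 0) (at s0)"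
  shows "((\<lambda>s. \<psi> (f s)) has_vector_derivative 0) (at s0)"
proof -
  obtain L \<delta> where L: "\<delta> > 0" "\<And>y. norm (y - f s0) < \<delta> \<Longrightarrow> norm (\<psi> y - \<psi> (f s0)) \<le> L * norm (y - f s0)"
    using smooth_on_lipschitz_at[OF assms(1-3)] by blast
  have "isCont f s0" using f by (rule has_vector_derivative_continuous)
  then obtain d0 where d0: "d0 > 0" "\<And>y. \<bar>y - s0\<bar> < d0 \<Longrightarrow> norm (f y - f s0) < \<delta>"
    unfolding continuous_at_eps_delta dist_norm using L(1) by fastforce
  show ?thesis
  proof (rule has_vector_derivative_zero_if_dominated[OF f abs_ge_zero d0(1)])
    fix y assume "\<bar>y - s0\<bar> < d0"
    then have "norm (\<psi> (f y) - \<psi> (f s0)) \<le> L * norm (f y - f s0)" by (intro L(2) d0(2))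
    also have "\<dots> \<le> \<bar>L\<bar> * norm (f y - f s0)" by (intro mult_right_mono) auto
    finally show "norm (\<psi> (f y) - \<psi> (f s0)) \<le> \<bar>L\<bar> * norm (f y - f s0)" .
  qed
qed

lemma smooth_on_real_has_vector_derivative:
  fixes f :: "real \<Rightarrow> 'a::real_normed_vector"
  assumes "smooth_on S f" "s \<in> S"
  shows "(f has_vector_derivative dder [1] f s) (at s)"
  using smooth_on_has_directional_derivative[OF assms, of "[]" 1]
  by (simp add: has_vector_derivative_shift_0[of f])

lemma diffeo_germ_real_derivative_nonzero:
  assumes "diffeo_germ (UNIV :: real set) s0 s0 \<phi>"
  obtains d where "(\<phi> has_vector_derivative d) (at s0)" "d \<noteq> 0"
proof -
  obtain U V \<theta> where U: "open U" "s0 \<in> U" and V: "s0 \<in> V" and \<phi>0: "\<phi> s0 = s0"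
    and sm: "smooth_on U \<phi>" "smooth_on V \<theta>" and inv: "\<And>x. x \<in> U \<Longrightarrow> \<theta> (\<phi> x) = x"
    using assms unfolding diffeo_germ_def by auto
  have d\<phi>: "(\<phi> has_vector_derivative dder [1] \<phi> s0) (at s0)"
    by (rule smooth_on_real_has_vector_derivative[OF sm(1) U(2)])
  have "(\<theta> has_vector_derivative dder [1] \<theta> s0) (at (\<phi> s0))"
    unfolding \<phi>0 by (rule smooth_on_real_has_vector_derivative[OF sm(2) V])
  from vector_diff_chain_at[OF d\<phi> this]
  have "((\<theta> \<circ> \<phi>) has_vector_derivative dder [1] \<phi> s0 *\<^sub>R dder [1] \<theta> s0) (at s0)" .
  moreover have "((\<theta> \<circ> \<phi>) has_vector_derivative 1) (at s0)"
    by (rule has_vector_derivative_transform_within_open[OF has_vector_derivative_id U]) (use inv in auto)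
  ultimately have "dder [1] \<phi> s0 *\<^sub>R dder [1] \<theta> s0 = 1"
    by (rule vector_derivative_unique_at)
  then show ?thesis using that d\<phi> by fastforce
qed

lemma not_A_equiv_if_singular_regular:
  fixes f g :: "real \<Rightarrow> real^'m::finite"
  assumes f: "(f has_vector_derivative 0) (at s0)"
    and g: "(g has_vector_derivative g') (at s0)" "g' \<noteq> 0"
  shows "\<not> A_equiv f g s0"
proof
  assume "A_equiv f g s0"
  then obtain \<phi> \<psi> where \<phi>: "diffeo_germ (UNIV :: real set) s0 s0 \<phi>"
    and \<psi>: "diffeo_germ (sphere 0 1) (f s0) (g s0) \<psi>"
    and ev: "\<forall>\<^sub>F s in nhds s0. g (\<phi> s) = \<psi> (f s)"
    unfolding A_equiv_def by blast
  obtain d where d: "(\<phi> has_vector_derivative d) (at s0)" "d \<noteq> 0"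
    using diffeo_germ_real_derivative_nonzero[OF \<phi>] .
  have "\<phi> s0 = s0" using \<phi> by (simp add: diffeo_germ_def)
  then have "((\<lambda>s. g (\<phi> s)) has_vector_derivative d *\<^sub>R g') (at s0)"
    using vector_diff_chain_at[OF d(1), of g g'] g(1) by (simp add: o_def)
  moreover have "\<forall>\<^sub>F s in nhds s0. s \<in> UNIV \<longrightarrow> g (\<phi> s) = \<psi> (f s)"
    using ev by simp
  note has_vector_derivative_cong_ev[OF this eventually_nhds_x_imp_x[OF ev]]
  ultimately have "((\<lambda>s. \<psi> (f s)) has_vector_derivative d *\<^sub>R g') (at s0)"
    by simp
  moreover obtain W where "open W" "f s0 \<in> W" "smooth_on W \<psi>"
    using \<psi> unfolding diffeo_germ_def by blast
  then have "((\<lambda>s. \<psi> (f s)) has_vector_derivative 0) (at s0)"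
    using f by (rule smooth_on_compose_zero_derivative)
  ultimately have "d *\<^sub>R g' = 0" by (rule vector_derivative_unique_at)
  then show False using d(2) g(2) by simp
qed

section \<open>Orthotomic and pedal curves\<close>

lemma pedal_eq_midpoint_projection_orthotomic:
  fixes P U :: "real^'m::finite"
  assumes P: "norm P = 1" and U: "norm U = 1"
  shows "(P - (P \<bullet> U) *\<^sub>R U) /\<^sub>R sqrt (1 - (P \<bullet> U)\<^sup>2) =
    midpoint_projection P (P - (2 * (P \<bullet> U)) *\<^sub>R U)"
proof -
  have "P \<bullet> P = 1" "U \<bullet> U = 1" using P U by (simp_all add: dot_square_norm)
  then have "(P - (P \<bullet> U) *\<^sub>R U) \<bullet> (P - (P \<bullet> U) *\<^sub>R U) = 1 - (P \<bullet> U)\<^sup>2"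
    by (simp add: inner_diff_left inner_diff_right inner_commute[of U P] power2_eq_square)
  then have "norm (P - (P \<bullet> U) *\<^sub>R U) = sqrt (1 - (P \<bullet> U)\<^sup>2)"
    by (simp add: norm_eq_sqrt_inner)
  moreover have "P + (P - (2 * (P \<bullet> U)) *\<^sub>R U) = 2 *\<^sub>R (P - (P \<bullet> U) *\<^sub>R U)"
    by (simp add: algebra_simps scaleR_2)
  ultimately show ?thesis by (simp add: midpoint_projection_def)
qed

lemma orthotomic_has_vector_derivative_zero:
  fixes U :: "real \<Rightarrow> real^'m::finite"
  assumes U: "(U has_vector_derivative U') (at s0)" and "P \<bullet> U s0 = 0" "P \<bullet> U' = 0"
  shows "((\<lambda>s. P - (2 * (P \<bullet> U s)) *\<^sub>R U s) has_vector_derivative 0) (at s0)"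
proof -
  have "((\<lambda>s. P \<bullet> U s) has_vector_derivative P \<bullet> U') (at s0)"
    by (rule bounded_linear.has_vector_derivative[OF bounded_linear_inner_right U])
  then have "((\<lambda>s. 2 * (P \<bullet> U s)) has_real_derivative 2 * (P \<bullet> U')) (at s0)"
    unfolding has_real_derivative_iff_has_vector_derivative[symmetric]
    by (auto intro!: derivative_eq_intros)
  from has_vector_derivative_diff[OF has_vector_derivative_const has_vector_derivative_scaleR[OF this U]]
  show ?thesis using assms(2,3) by simp
qed

lemma L_equiv_by_midpoint_projection:
  fixes f g :: "real \<Rightarrow> real^'m::finite"
  assumes "norm (f s0) = 1" and "\<forall>\<^sub>F s in nhds s0. g s = midpoint_projection (f s0) (f s)"
  shows "L_equiv f g s0"
  using assms diffeo_germ_midpoint_projection eventually_nhds_x_imp_x[OF assms(2)]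
    diffeo_germ_def unfolding L_equiv_def by metis

theorem mainTheorem10:
  fixes n :: nat and idx :: "nat \<Rightarrow> 'm::finite" and I :: "real set"
    and \<gamma> :: "real \<Rightarrow> real^'m" and s0 :: real and P :: "real^'m"
  assumes "n \<ge> 2" and "CARD('m) = Suc n" and "bij_betw idx {..n} UNIV"
    and "open I" and "is_interval I"
    and "spherical_unit_speed n I \<gamma>"
    and "\<forall>s\<in>I. dual_curve n idx \<gamma> differentiable (at s) \<and>
               vector_derivative (dual_curve n idx \<gamma>) (at s) \<noteq> 0"
    and "s0 \<in> I"
    and "P \<in> sub_sphere n idx \<gamma> (n - 2) s0"
  shows "L_equiv (orthotomic n idx \<gamma> P) (pedal n idx \<gamma> P) s0 \<and>
         \<not> A_equiv (orthotomic n idx \<gamma> P) (dual_curve n idx \<gamma>) s0"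
proof -
  let ?U = "dual_curve n idx \<gamma>"
  note P = sub_sphere_orthogonal_dual_curve[OF assms(3,2,1,4,6,8,9)]
  have U_unit: "norm (?U s) = 1" if "s \<in> I" for s
    using dual_curve_unit_orthogonal(1)[OF assms(3,2) spherical_unit_speed_frame(2)[OF assms(4,6) _ _ that]] .
  have diff: "?U differentiable at s0" and regular: "vderiv ?U s0 \<noteq> 0"
    using assms(7,8) by (auto simp: vderiv_def)
  have ort: "orthotomic n idx \<gamma> P = (\<lambda>s. P - (2 * (P \<bullet> ?U s)) *\<^sub>R ?U s)"
    by (simp add: fun_eq_iff orthotomic_def Let_def)
  have "\<forall>\<^sub>F s in nhds s0. pedal n idx \<gamma> P s = midpoint_projection P (orthotomic n idx \<gamma> P s)"
    using assms(4,8) U_unit pedal_eq_midpoint_projection_orthotomic[OF P(1)]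
    by (auto simp: eventually_nhds pedal_def ort Let_def intro!: exI[of _ I])
  moreover have "orthotomic n idx \<gamma> P s0 = P" using P(2) by (simp add: ort)
  ultimately have "L_equiv (orthotomic n idx \<gamma> P) (pedal n idx \<gamma> P) s0"
    using P(1) by (intro L_equiv_by_midpoint_projection) auto
  moreover have "(orthotomic n idx \<gamma> P has_vector_derivative 0) (at s0)"
    unfolding ort
    by (rule orthotomic_has_vector_derivative_zero[OF vderiv_has_vector_derivative[OF diff] P(2) P(3)[OF diff]])
  ultimately show ?thesis
    using not_A_equiv_if_singular_regular[OF _ vderiv_has_vector_derivative[OF diff] regular] by blast
qed

end
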